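(* (i) For every even $n$ and every integer $k$ with $4\le k\le n$, every one-factorization of $K_n$ has a set $S$ of $k$ vertices with deficit $D(S)\ge k-3$. (ii) For every integer $d\ge -2$ there are $C>0$ and $n_0$ such that for every even $n\ge n_0$, every one-factorization of $K_n$ has a set $S$ of $k\le C\log n$ vertices (for some $k\ge1$) with deficit $D(S)\ge k+d$.
   Context: A one-factorization of $K_n$ ($n$ even) is a proper edge-coloring of $K_n$ with $n-1$ colors, so each color class is a perfect matching. For a set $S$ of vertices, $\gamma(S)$ is the number of distinct colors appearing on edges with both endpoints in $S$, and the deficit of $S$ is $D(S)=\binom{|S|}{2}-\gamma(S)$. *)

theory Defs
  imports "HOL-Analysis.Analysis"
begin

text \<open>The complete graph K_n has vertex set {0..<n}. An edge colouring is a
function c on ordered pairs of vertices, required to be symmetric; c x y is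
the colour of the edge {x,y} for x \<noteq> y (values on the diagonal are irrelevant).\<close>

definition one_factorization :: "nat \<Rightarrow> (nat \<Rightarrow> nat \<Rightarrow> nat) \<Rightarrow> bool" where
  "one_factorization n c \<longleftrightarrow>
     (\<forall>x<n. \<forall>y<n. x \<noteq> y \<longrightarrow> c x y = c y x) \<and>
     (\<forall>x<n. \<forall>y<n. x \<noteq> y \<longrightarrow> c x y < n - 1) \<and>
     (\<forall>x<n. \<forall>y<n. \<forall>z<n. x \<noteq> y \<and> x \<noteq> z \<and> y \<noteq> z \<longrightarrow> c x y \<noteq> c x z)"

definition colours_in :: "(nat \<Rightarrow> nat \<Rightarrow> nat) \<Rightarrow> nat set \<Rightarrow> nat set" where
  "colours_in c S = {c x y | x y. x \<in> S \<and> y \<in> S \<and> x \<noteq> y}"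

definition gamma :: "(nat \<Rightarrow> nat \<Rightarrow> nat) \<Rightarrow> nat set \<Rightarrow> nat" where
  "gamma c S = card (colours_in c S)"

definition deficit :: "(nat \<Rightarrow> nat \<Rightarrow> nat) \<Rightarrow> nat set \<Rightarrow> int" where
  "deficit c S = int (card S choose 2) - int (gamma c S)"

end

theory Submission
  imports Defs "HOL-Library.Ramsey" "HOL-Library.Log_Nat"
begin

text \<open>
(i) Grow S one vertex at a time, keeping D(S) \<ge> |S| - 3. Fix s \<in> S. If every colour inside S
already occurs on an edge of S at s, then S has at most |S| - 1 colours and D(S) \<ge> |S| - 2, which
survives adding any vertex. Otherwise some colour of S is missing at s inside S; adding the
partner z of s in that colour creates an edge zs of an old colour, so D grows by at least one.

(ii) The edges of the t smallest colours form a t-regular graph. Grow a breadth-first tree from a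
vertex. If the ball of radius R \<approx> log n contains Q + 1 non-tree edges, their tree paths to the root
span a set X of O(Q log n) vertices with at least |X| + Q low edges; otherwise the ball doubles at
every step, which is impossible beyond radius log n. As the low edges of X use at most t colours,
D(X) \<ge> e(X) - t \<ge> |X| + Q - t, which is |X| + d for Q = t + d.
\<close>

lemma one_factorization_sym:
  "one_factorization n c \<Longrightarrow> x < n \<Longrightarrow> y < n \<Longrightarrow> x \<noteq> y \<Longrightarrow> c x y = c y x"
  unfolding one_factorization_def by blast

lemma one_factorization_bij_betw:
  assumes "one_factorization n c" "x < n"
  shows "bij_betw (c x) ({0..<n} - {x}) {0..<n - 1}"
proof -
  have inj: "inj_on (c x) ({0..<n} - {x})"
    using assms unfolding one_factorization_def inj_on_def by (metis Diff_iff atLeastLessThan_iff singletonI)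
  moreover have "c x ` ({0..<n} - {x}) \<subseteq> {0..<n - 1}"
    using assms unfolding one_factorization_def by fastforce
  moreover have "card (c x ` ({0..<n} - {x})) = card {0..<n - 1}"
    using card_image[OF inj] assms(2) by simp
  ultimately show ?thesis
    unfolding bij_betw_def by (simp add: card_subset_eq)
qed

lemma one_factorization_partner:
  assumes "one_factorization n c" "x < n" "col < n - 1"
  obtains z where "z < n" "z \<noteq> x" "c x z = col"
proof -
  have "col \<in> {0..<n - 1}"
    using assms(3) by simp
  then have "col \<in> c x ` ({0..<n} - {x})"
    unfolding bij_betw_imp_surj_on[OF one_factorization_bij_betw[OF assms(1,2)]] .
  then obtain z where "z \<in> {0..<n} - {x}" "col = c x z" ..
  then show ?thesis
    using that[of z] by simp
qed

lemma one_factorization_colour_less: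
  "one_factorization n c \<Longrightarrow> x < n \<Longrightarrow> y < n \<Longrightarrow> x \<noteq> y \<Longrightarrow> c x y < n - 1"
  unfolding one_factorization_def by blast

section \<open>Growing a set one vertex at a time\<close>

lemma finite_colours_in: "finite S \<Longrightarrow> finite (colours_in c S)"
  unfolding colours_in_def by (rule finite_subset[of _ "(\<lambda>(x, y). c x y) ` (S \<times> S)"]) auto

lemma colours_in_insert:
  assumes "one_factorization n c" "S \<subseteq> {0..<n}" "v < n" "v \<notin> S"
  shows "colours_in c (insert v S) = colours_in c S \<union> c v ` S"
proof -
  have "c x v = c v x" if "x \<in> S" for x
    using one_factorization_sym[OF assms(1), of x v] that assms by fastforce
  then show ?thesis
    using assms(4) unfolding colours_in_def by blast
qed

lemma deficit_insert:
  assumes "one_factorization n c" "S \<subseteq> {0..<n}" "v < n" "v \<notin> S"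
  shows "deficit c (insert v S) = deficit c S + int (card S) - int (card (c v ` S - colours_in c S))"
proof -
  have fin: "finite S"
    using assms(2) finite_subset by blast
  have "gamma c (insert v S) = card (colours_in c S \<union> (c v ` S - colours_in c S))"
    unfolding gamma_def colours_in_insert[OF assms] by (simp add: Un_Diff_cancel)
  also have "\<dots> = gamma c S + card (c v ` S - colours_in c S)"
    unfolding gamma_def by (rule card_Un_disjoint) (auto intro: finite_colours_in fin)
  finally show ?thesis
    using fin assms(4) unfolding deficit_def by (simp add: numeral_2_eq_2)
qed

lemma deficit_insert_mono:
  assumes "one_factorization n c" "S \<subseteq> {0..<n}" "v < n" "v \<notin> S"
  shows "deficit c S \<le> deficit c (insert v S)"
proof -
  have fin: "finite S"
    using assms(2) finite_subset by blast
  have "card (c v ` S - colours_in c S) \<le> card (c v ` S)"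
    using fin by (intro card_mono) auto
  also have "\<dots> \<le> card S"
    by (rule card_image_le[OF fin])
  finally show ?thesis
    unfolding deficit_insert[OF assms] by simp
qed

lemma double_le_choose_two_plus_3: "2 * k \<le> (k choose 2) + 3"
proof (induction k)
  case (Suc k)
  have "Suc k choose 2 = (k choose 2) + k"
    by (simp add: numeral_2_eq_2)
  then show ?case
    using Suc.IH by (cases "k \<le> 1") auto
qed simp

lemma deficit_ge_if_colours_at_vertex:
  assumes "finite S" "s \<in> S" "colours_in c S \<subseteq> c s ` (S - {s})"
  shows "int (card S) - 2 \<le> deficit c S"
proof -
  have "gamma c S \<le> card (c s ` (S - {s}))"
    unfolding gamma_def using assms(1,3) by (intro card_mono) auto
  also have "\<dots> \<le> card (S - {s})"
    by (rule card_image_le) (use assms(1) in simp)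
  also have "\<dots> < card S"
    using assms(1,2) by (rule card_Diff1_less)
  finally have "int (gamma c S) + 1 \<le> int (card S)"
    by linarith
  then show ?thesis
    unfolding deficit_def using double_le_choose_two_plus_3[of "card S"] by linarith
qed

lemma deficit_insert_partner:
  assumes of: "one_factorization n c" and S: "S \<subseteq> {0..<n}" "s \<in> S"
    and col: "col \<in> colours_in c S" "col \<notin> c s ` (S - {s})"
  obtains z where "z < n" "z \<notin> S" "deficit c S + 1 \<le> deficit c (insert z S)"
proof -
  have fin: "finite S"
    using S(1) finite_subset by blast
  obtain x y where xy: "x \<in> S" "y \<in> S" "x \<noteq> y" "col = c x y"
    using col(1) unfolding colours_in_def by blast
  moreover have "x < n" "y < n"
    using xy S(1) by auto
  ultimately have "col < n - 1"
    using one_factorization_colour_less[OF of] by blast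
  moreover have "s < n"
    using S by auto
  ultimately obtain z where z: "z < n" "z \<noteq> s" "c s z = col"
    using one_factorization_partner[OF of] by blast
  have "z \<notin> S"
    using z col(2) by auto
  have "c z s = col"
    using z one_factorization_sym[OF of, of s z] S by auto
  then have "c z ` S - colours_in c S \<subseteq> c z ` (S - {s})"
    using col(1) by auto
  then have "card (c z ` S - colours_in c S) \<le> card (c z ` (S - {s}))"
    using fin by (intro card_mono) auto
  also have "\<dots> \<le> card (S - {s})"
    using fin by (intro card_image_le) simp
  also have "\<dots> < card S"
    using fin S(2) by (rule card_Diff1_less)
  finally have "deficit c S + 1 \<le> deficit c (insert z S)"
    unfolding deficit_insert[OF of S(1) z(1) \<open>z \<notin> S\<close>] by simp
  with z(1) \<open>z \<notin> S\<close> show ?thesis ..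
qed

lemma exists_insert_deficit_ge:
  assumes of: "one_factorization n c" and S: "S \<subseteq> {0..<n}" "S \<noteq> {}" "card S < n"
    and deficit: "int (card S) - 3 \<le> deficit c S"
  obtains z where "z < n" "z \<notin> S" "int (card S) - 2 \<le> deficit c (insert z S)"
proof -
  have fin: "finite S"
    using S(1) finite_subset by blast
  obtain s where s: "s \<in> S"
    using S(2) by blast
  show ?thesis
  proof (cases "colours_in c S \<subseteq> c s ` (S - {s})")
    case True
    have "\<not> {0..<n} \<subseteq> S"
    proof
      assume "{0..<n} \<subseteq> S"
      then have "card {0..<n} \<le> card S"
        by (rule card_mono[OF fin])
      with S(3) show False
        by simp
    qed
    then obtain v where "v \<in> {0..<n}" "v \<notin> S"
      by blast
    then have v: "v < n" "v \<notin> S"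
      by simp_all
    have "int (card S) - 2 \<le> deficit c (insert v S)"
      using deficit_ge_if_colours_at_vertex[OF fin s True] deficit_insert_mono[OF of S(1) v]
      by linarith
    with v show ?thesis
      by (rule that)
  next
    case False
    then obtain col where "col \<in> colours_in c S" "col \<notin> c s ` (S - {s})"
      by blast
    from deficit_insert_partner[OF of S(1) s this] obtain z
      where z: "z < n" "z \<notin> S" "deficit c S + 1 \<le> deficit c (insert z S)" .
    moreover have "int (card S) - 2 \<le> deficit c (insert z S)"
      using z(3) deficit by linarith
    ultimately show ?thesis
      using that by blast
  qed
qed

lemma exists_subset_deficit_ge:
  assumes of: "one_factorization n c" and k: "1 \<le> k" "k \<le> n"
  shows "\<exists>S \<subseteq> {0..<n}. card S = k \<and> int k - 3 \<le> deficit c S"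
  using k
proof (induction k rule: nat_induct_at_least)
  case base
  have "deficit c {0} = 0"
    unfolding deficit_def gamma_def colours_in_def by simp
  then show ?case
    using base by (intro exI[of _ "{0}"]) auto
next
  case (Suc k)
  then obtain S where S: "S \<subseteq> {0..<n}" "card S = k" "int (card S) - 3 \<le> deficit c S"
    by auto
  moreover have "S \<noteq> {}" "card S < n"
    using S(2) Suc.hyps Suc.prems by auto
  ultimately obtain z where z: "z < n" "z \<notin> S" "int (card S) - 2 \<le> deficit c (insert z S)"
    using exists_insert_deficit_ge[OF of] by blast
  have "insert z S \<subseteq> {0..<n}" "card (insert z S) = Suc k"
    using S(1,2) z(1,2) finite_subset[OF S(1)] by auto
  moreover have "int (Suc k) - 3 \<le> deficit c (insert z S)"
    using z(3) S(2) by simp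
  ultimately show ?case
    by blast
qed

section \<open>Breadth-first search trees\<close>

locale rooted_graph =
  fixes n :: nat and adj :: "nat \<Rightarrow> nat \<Rightarrow> bool" and root :: nat
  assumes adj_sym: "adj x y \<Longrightarrow> adj y x"
    and adj_less: "adj x y \<Longrightarrow> x < n"
    and adj_irrefl: "\<not> adj x x"
    and root_less: "root < n"
begin

primrec ball :: "nat \<Rightarrow> nat set" where
  "ball 0 = {root}"
| "ball (Suc j) = ball j \<union> {y. \<exists>x\<in>ball j. adj x y}"

definition depth :: "nat \<Rightarrow> nat" where
  "depth x = (LEAST j. x \<in> ball j)"

definition parent :: "nat \<Rightarrow> nat" where
  "parent x = (SOME y. y \<in> ball (depth x - 1) \<and> adj y x)"

definition path_to_root :: "nat \<Rightarrow> nat set" where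
  "path_to_root x = (\<lambda>i. (parent ^^ i) x) ` {..depth x}"

definition edges :: "nat set \<Rightarrow> nat set set" where
  "edges X = {{x, y} | x y. x \<in> X \<and> y \<in> X \<and> adj x y}"

definition tree_edge :: "nat \<Rightarrow> nat set" where
  "tree_edge x = {x, parent x}"

definition non_tree_edges :: "nat set \<Rightarrow> nat set set" where
  "non_tree_edges X = edges X - tree_edge ` (X - {root})"

lemma adj_less_right: "adj x y \<Longrightarrow> y < n"
  using adj_less adj_sym by blast

lemma finite_neighbours: "finite {y. adj x y}"
  by (rule finite_subset[of _ "{0..<n}"]) (auto dest: adj_less_right)

lemma ball_subset: "ball j \<subseteq> {0..<n}"
  by (induction j) (auto simp: root_less dest: adj_less_right)

lemma ball_less: "x \<in> ball j \<Longrightarrow> x < n"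
  using ball_subset[of j] by auto

lemma finite_ball: "finite (ball j)"
  using ball_subset finite_subset by blast

lemma ball_mono: "i \<le> j \<Longrightarrow> ball i \<subseteq> ball j"
  by (induction j) (auto simp: le_Suc_eq)

lemma root_in_ball: "root \<in> ball j"
  using ball_mono[of 0 j] by simp

lemma depth_le: "x \<in> ball j \<Longrightarrow> depth x \<le> j"
  unfolding depth_def by (rule Least_le)

lemma in_ball_depth: "x \<in> ball j \<Longrightarrow> x \<in> ball (depth x)"
  unfolding depth_def by (rule LeastI)

lemma depth_eq_0_iff: "x \<in> ball j \<Longrightarrow> depth x = 0 \<longleftrightarrow> x = root"
  using in_ball_depth depth_le[of root 0] by fastforce

lemma
  assumes "x \<in> ball j" "x \<noteq> root"
  shows adj_parent: "adj (parent x) x"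
    and parent_in_ball: "parent x \<in> ball j"
    and depth_parent: "Suc (depth (parent x)) = depth x"
proof -
  obtain m where m: "depth x = Suc m"
    using assms depth_eq_0_iff not0_implies_Suc by blast
  have "x \<notin> ball m"
    using not_less_Least[of m "\<lambda>j. x \<in> ball j"] m unfolding depth_def by simp
  moreover have "x \<in> ball (Suc m)"
    using in_ball_depth[OF assms(1)] m by simp
  ultimately have "\<exists>y. y \<in> ball (depth x - 1) \<and> adj y x"
    using m by auto
  then have parent: "parent x \<in> ball m" "adj (parent x) x"
    unfolding parent_def using m someI_ex[of "\<lambda>y. y \<in> ball (depth x - 1) \<and> adj y x"] by auto
  then show "adj (parent x) x"
    by simp
  show "parent x \<in> ball j"
    using parent(1) ball_mono[of m j] depth_le[OF assms(1)] m by auto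
  have "x \<in> ball (Suc (depth (parent x)))"
    using in_ball_depth[OF parent(1)] parent(2) by auto
  then show "Suc (depth (parent x)) = depth x"
    using depth_le[OF parent(1)] depth_le[of x] m by fastforce
qed

lemma parent_iter:
  assumes "x \<in> ball j" "i \<le> depth x"
  shows "(parent ^^ i) x \<in> ball j \<and> depth ((parent ^^ i) x) = depth x - i"
  using assms(2)
proof (induction i)
  case (Suc i)
  let ?y = "(parent ^^ i) x"
  have "?y \<in> ball j" "depth ?y = depth x - i"
    using Suc by auto
  moreover have "?y \<noteq> root"
    using calculation Suc.prems depth_eq_0_iff by fastforce
  ultimately show ?case
    using parent_in_ball depth_parent by fastforce
qed (use assms(1) in simp)

lemma path_to_root_subset: "x \<in> ball j \<Longrightarrow> path_to_root x \<subseteq> ball j"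
  unfolding path_to_root_def using parent_iter by auto

lemma card_path_to_root: "x \<in> ball j \<Longrightarrow> card (path_to_root x) \<le> Suc j"
  unfolding path_to_root_def using card_image_le[of "{..depth x}"] depth_le
  by (metis card_atMost finite_atMost le_trans not_less_eq_eq)

lemma self_in_path_to_root: "x \<in> path_to_root x"
  unfolding path_to_root_def by (rule rev_image_eqI[of 0]) simp_all

lemma parent_in_path_to_root:
  assumes "x \<in> ball j" "y \<in> path_to_root x" "y \<noteq> root"
  shows "parent y \<in> path_to_root x"
proof -
  obtain i where i: "i \<le> depth x" "y = (parent ^^ i) x"
    using assms(2) unfolding path_to_root_def by auto
  then have "i < depth x"
    using parent_iter[OF assms(1) i(1)] depth_eq_0_iff assms(3) by (metis diff_is_0_eq le_neq_implies_less)
  then show ?thesis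
    unfolding path_to_root_def using i by (intro rev_image_eqI[of "Suc i"]) auto
qed

lemma edges_subset_nsets: "edges X \<subseteq> [X]\<^bsup>2\<^esup>"
  unfolding edges_def using adj_irrefl by auto

lemma edgesE:
  assumes "e \<in> edges X"
  obtains x y where "e = {x, y}" "x \<in> X" "y \<in> X" "adj x y" "x \<noteq> y"
  using assms adj_irrefl unfolding edges_def by blast

lemma finite_edges: "finite X \<Longrightarrow> finite (edges X)"
  using edges_subset_nsets finite_imp_finite_nsets finite_subset by blast

lemma edges_mono: "X \<subseteq> Y \<Longrightarrow> edges X \<subseteq> edges Y"
  unfolding edges_def by blast

lemma tree_edge_in_edges:
  assumes "y \<in> ball j" "y \<noteq> root" "y \<in> X" "parent y \<in> X"
  shows "tree_edge y \<in> edges X"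
  unfolding tree_edge_def edges_def using assms adj_parent[OF assms(1,2)] by (blast dest: adj_sym)

text \<open>Tree edges are injective because a parent is strictly closer to the root than its child.\<close>
lemma inj_on_tree_edge: "inj_on tree_edge (ball j - {root})"
proof (rule inj_onI)
  fix y z assume y: "y \<in> ball j - {root}" and z: "z \<in> ball j - {root}"
    and eq: "tree_edge y = tree_edge z"
  show "y = z"
  proof (rule ccontr)
    assume "y \<noteq> z"
    then have "y = parent z" "z = parent y"
      using eq unfolding tree_edge_def by (auto simp: doubleton_eq_iff)
    then show False
      using depth_parent[of y j] depth_parent[of z j] y z by auto
  qed
qed

lemma card_edges_ball: "card (edges (ball j)) = card (ball j) - 1 + card (non_tree_edges (ball j))"
proof -
  have sub: "tree_edge ` (ball j - {root}) \<subseteq> edges (ball j)"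
    using tree_edge_in_edges parent_in_ball by blast
  have "card (non_tree_edges (ball j)) = card (edges (ball j)) - card (tree_edge ` (ball j - {root}))"
    unfolding non_tree_edges_def using finite_edges[OF finite_ball] sub
    by (intro card_Diff_subset) (auto intro: finite_subset)
  then have "card (edges (ball j)) = card (tree_edge ` (ball j - {root})) + card (non_tree_edges (ball j))"
    using card_mono[OF finite_edges[OF finite_ball] sub] by simp
  also have "card (tree_edge ` (ball j - {root})) = card (ball j) - 1"
    using card_image[OF inj_on_tree_edge] root_in_ball finite_ball by simp
  finally show ?thesis .
qed

lemma non_tree_edges_ball_mono:
  assumes "i \<le> j"
  shows "non_tree_edges (ball i) \<subseteq> non_tree_edges (ball j)"
proof
  fix e assume e: "e \<in> non_tree_edges (ball i)"
  then have "e \<in> edges (ball j)"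
    unfolding non_tree_edges_def using edges_mono[OF ball_mono[OF assms]] by blast
  moreover have "e \<notin> tree_edge ` (ball j - {root})"
  proof
    assume "e \<in> tree_edge ` (ball j - {root})"
    then obtain y where y: "y \<noteq> root" "e = tree_edge y"
      by blast
    moreover have "e \<subseteq> ball i"
      using e edges_subset_nsets unfolding non_tree_edges_def nsets_def by blast
    ultimately have "y \<in> ball i - {root}"
      unfolding tree_edge_def by blast
    with e y show False
      unfolding non_tree_edges_def by blast
  qed
  ultimately show "e \<in> non_tree_edges (ball j)"
    unfolding non_tree_edges_def by blast
qed

lemma card_arcs_le:
  assumes "finite X"
  shows "card {(x, y). x \<in> X \<and> y \<in> X \<and> adj x y} \<le> 2 * card (edges X)"
proof -
  let ?arcs = "\<lambda>e. {(x, y). x \<in> e \<and> y \<in> e \<and> x \<noteq> y}"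
  have "{(x, y). x \<in> X \<and> y \<in> X \<and> adj x y} \<subseteq> (\<Union>e\<in>edges X. ?arcs e)"
  proof
    fix p assume "p \<in> {(x, y). x \<in> X \<and> y \<in> X \<and> adj x y}"
    then obtain x y where p: "p = (x, y)" "x \<in> X" "y \<in> X" "adj x y"
      by blast
    then have "{x, y} \<in> edges X"
      unfolding edges_def by blast
    moreover have "p \<in> ?arcs {x, y}"
      using p adj_irrefl by auto
    ultimately show "p \<in> (\<Union>e\<in>edges X. ?arcs e)"
      by blast
  qed
  moreover have "(\<Union>e\<in>edges X. ?arcs e) \<subseteq> X \<times> X"
    by (auto elim!: edgesE)
  ultimately have "card {(x, y). x \<in> X \<and> y \<in> X \<and> adj x y} \<le> card (\<Union>e\<in>edges X. ?arcs e)"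
    using finite_subset[OF _ finite_cartesian_product[OF assms assms]] by (intro card_mono) blast+
  also have "\<dots> \<le> (\<Sum>e\<in>edges X. card (?arcs e))"
    by (rule card_UN_le[OF finite_edges[OF assms]])
  also have "\<dots> \<le> (\<Sum>e\<in>edges X. 2)"
  proof (rule sum_mono)
    fix e assume "e \<in> edges X"
    then obtain x y where "e = {x, y}"
      by (rule edgesE)
    then have "card (?arcs e) \<le> card {(x, y), (y, x)}"
      by (intro card_mono) auto
    also have "\<dots> \<le> 2"
      by (rule card_insert_le_m1) simp_all
    finally show "card (?arcs e) \<le> 2" .
  qed
  finally show ?thesis
    by (simp add: mult.commute)
qed

lemma degree_sum_le:
  assumes deg: "\<forall>x<n. \<delta> \<le> card {y. adj x y}"
  shows "\<delta> * card (ball j) \<le> 2 * card (edges (ball (Suc j)))"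
proof -
  let ?B = "ball (Suc j)"
  have "\<delta> \<le> card {y. adj x y}" if "x \<in> ball j" for x
    using deg ball_less that by blast
  then have "\<delta> * card (ball j) \<le> (\<Sum>x\<in>ball j. card {y. adj x y})"
    using sum_bounded_below[of "ball j" \<delta>] by (simp add: mult.commute)
  also have "\<dots> = card (SIGMA x:ball j. {y. adj x y})"
    by (rule card_SigmaI[OF finite_ball, symmetric]) (simp add: finite_neighbours)
  also have "\<dots> \<le> card {(x, y). x \<in> ?B \<and> y \<in> ?B \<and> adj x y}"
  proof (rule card_mono)
    show "finite {(x, y). x \<in> ?B \<and> y \<in> ?B \<and> adj x y}"
      by (rule finite_subset[of _ "?B \<times> ?B"]) (auto simp del: ball.simps intro: finite_ball)
    show "(SIGMA x:ball j. {y. adj x y}) \<subseteq> {(x, y). x \<in> ?B \<and> y \<in> ?B \<and> adj x y}"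
      by auto
  qed
  also have "\<dots> \<le> 2 * card (edges ?B)"
    by (rule card_arcs_le[OF finite_ball])
  finally show ?thesis .
qed

lemma card_edges_parent_closed:
  assumes X: "X \<subseteq> ball j" "\<And>y. y \<in> X \<Longrightarrow> y \<noteq> root \<Longrightarrow> parent y \<in> X"
    and F: "F \<subseteq> non_tree_edges (ball j)" "F \<subseteq> edges X"
  shows "card X + card F \<le> card (edges X) + 1"
proof -
  have finX: "finite X"
    using X(1) finite_ball finite_subset by blast
  have "tree_edge ` (X - {root}) \<subseteq> edges X"
    using X tree_edge_in_edges by blast
  then have sub: "tree_edge ` (X - {root}) \<union> F \<subseteq> edges X"
    using F(2) by blast
  have disj: "tree_edge ` (X - {root}) \<inter> F = {}"
    using F(1) X(1) unfolding non_tree_edges_def by blast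
  have "card (X - {root}) = card (tree_edge ` (X - {root}))"
    using X(1) by (intro card_image[symmetric] inj_on_subset[OF inj_on_tree_edge]) blast
  also have "\<dots> + card F = card (tree_edge ` (X - {root}) \<union> F)"
    using finite_subset[OF sub finite_edges[OF finX]] disj by (intro card_Un_disjoint[symmetric]) auto
  also have "\<dots> \<le> card (edges X)"
    using sub finite_edges[OF finX] by (rule card_mono[rotated])
  finally show ?thesis
    using finX card_Diff_singleton_if[of X root] by (auto split: if_splits)
qed

text \<open>Joining the endpoints of Q + 1 non-tree edges to the root along the tree yields a
  parent-closed set with at least Q more edges than vertices.\<close>
lemma small_dense_subset_if_many_non_tree_edges:
  assumes "Q + 1 \<le> card (non_tree_edges (ball R))"
  shows "\<exists>X \<subseteq> ball R. X \<noteq> {} \<and> card X \<le> 2 * (Q + 1) * (R + 1) \<and> card X + Q \<le> card (edges X)"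
proof -
  obtain F where F: "F \<subseteq> non_tree_edges (ball R)" "card F = Q + 1"
    using obtain_subset_with_card_n[OF assms] by blast
  have finF: "finite F"
    by (rule card_ge_0_finite) (simp add: F(2))
  have F_edges: "e \<in> edges (ball R)" if "e \<in> F" for e
    using F(1) that unfolding non_tree_edges_def by blast
  have F_nsets: "e \<subseteq> ball R" "finite e" "card e = 2" if "e \<in> F" for e
    using F_edges[OF that] by (auto elim!: edgesE)
  define X where "X = (\<Union>e\<in>F. \<Union>x\<in>e. path_to_root x)"
  have X_ball: "X \<subseteq> ball R"
    unfolding X_def using F_nsets(1) path_to_root_subset by blast
  have X_closed: "parent y \<in> X" if y: "y \<in> X" "y \<noteq> root" for y
  proof -
    obtain e x where ex: "e \<in> F" "x \<in> e" "y \<in> path_to_root x"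
      using y(1) unfolding X_def by blast
    then have "parent y \<in> path_to_root x"
      using F_nsets(1) y(2) by (intro parent_in_path_to_root) auto
    with ex show ?thesis
      unfolding X_def by blast
  qed
  have F_X: "F \<subseteq> edges X"
  proof
    fix e assume e: "e \<in> F"
    then obtain x y where xy: "e = {x, y}" "adj x y"
      using F_edges by (blast elim: edgesE)
    have "x \<in> X" "y \<in> X"
      unfolding X_def using e xy(1) self_in_path_to_root by blast+
    with xy show "e \<in> edges X"
      unfolding edges_def by blast
  qed
  have "card X \<le> (\<Sum>e\<in>F. card (\<Union>x\<in>e. path_to_root x))"
    unfolding X_def by (rule card_UN_le[OF finF])
  also have "\<dots> \<le> (\<Sum>e\<in>F. \<Sum>x\<in>e. card (path_to_root x))"
    using F_nsets(2) by (intro sum_mono card_UN_le) blast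
  also have "\<dots> \<le> (\<Sum>e\<in>F. \<Sum>x\<in>e. R + 1)"
    using F_nsets(1) card_path_to_root by (intro sum_mono) fastforce
  also have "\<dots> = 2 * (Q + 1) * (R + 1)"
    using F(2) F_nsets(3) by simp
  finally have card_X: "card X \<le> 2 * (Q + 1) * (R + 1)" .
  obtain e where "e \<in> F"
    using F(2) by fastforce
  moreover obtain x where "x \<in> e"
    using F_nsets(3)[OF calculation] by fastforce
  ultimately have "X \<noteq> {}"
    unfolding X_def using self_in_path_to_root by blast
  moreover have "card X + Q \<le> card (edges X)"
    using card_edges_parent_closed[OF X_ball X_closed F(1) F_X] F(2) by simp
  ultimately show ?thesis
    using X_ball card_X by blast
qed

lemma card_ball_ge_degree:
  assumes deg: "\<forall>x<n. \<delta> \<le> card {y. adj x y}" and "1 \<le> j"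
  shows "\<delta> + 1 \<le> card (ball j)"
proof -
  have "insert root {y. adj root y} \<subseteq> ball j"
    using ball_mono[OF assms(2)] by auto
  then have "card (insert root {y. adj root y}) \<le> card (ball j)"
    by (rule card_mono[OF finite_ball])
  moreover have "card (insert root {y. adj root y}) = card {y. adj root y} + 1"
    using finite_neighbours adj_irrefl by simp
  ultimately show ?thesis
    using deg root_less by fastforce
qed

text \<open>Few non-tree edges make the ball almost a tree, while the minimum degree gives it many edges.\<close>
lemma card_ball_doubles:
  assumes deg: "\<forall>x<n. \<delta> \<le> card {y. adj x y}" and "8 \<le> \<delta>" "Q \<le> 2 * \<delta>"
    and few: "card (non_tree_edges (ball (Suc j))) \<le> Q" and "1 \<le> j"
  shows "2 * card (ball j) \<le> card (ball (Suc j))"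
proof -
  have "card (ball (Suc j)) \<noteq> 0"
    using finite_ball root_in_ball by (metis card_0_eq empty_iff)
  then have "card (edges (ball (Suc j))) + 1 \<le> card (ball (Suc j)) + Q"
    using card_edges_ball[of "Suc j"] few by linarith
  moreover have "\<delta> * card (ball j) \<le> 2 * card (edges (ball (Suc j)))"
    by (rule degree_sum_le[OF deg])
  moreover have "8 * card (ball j) \<le> \<delta> * card (ball j)"
    using assms(2) by simp
  moreover have "\<delta> + 1 \<le> card (ball j)"
    by (rule card_ball_ge_degree[OF deg assms(5)])
  ultimately show ?thesis
    using assms(3) by linarith
qed

lemma two_power_le_card_ball:
  assumes deg: "\<forall>x<n. \<delta> \<le> card {y. adj x y}" and "8 \<le> \<delta>" "Q \<le> 2 * \<delta>"
    and few: "card (non_tree_edges (ball R)) \<le> Q" and "1 \<le> j" "j \<le> R"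
  shows "2 ^ j \<le> card (ball j)"
  using assms(5,6)
proof (induction j rule: nat_induct_at_least)
  case base
  then show ?case
    using card_ball_ge_degree[OF deg, of 1] assms(2) by simp
next
  case (Suc j)
  have "card (non_tree_edges (ball (Suc j))) \<le> card (non_tree_edges (ball R))"
    using finite_edges[OF finite_ball] non_tree_edges_ball_mono[OF Suc.prems]
    unfolding non_tree_edges_def by (intro card_mono) auto
  then have "2 * card (ball j) \<le> card (ball (Suc j))"
    using card_ball_doubles[OF deg assms(2,3) _ Suc.hyps] few by simp
  then show ?case
    using Suc by simp
qed

lemma exists_small_dense_subset:
  assumes deg: "\<forall>x<n. \<delta> \<le> card {y. adj x y}" and "8 \<le> \<delta>" "Q \<le> 2 * \<delta>" and "n < 2 ^ R"
  shows "\<exists>X \<subseteq> {0..<n}. X \<noteq> {} \<and> card X \<le> 2 * (Q + 1) * (R + 1) \<and> card X + Q \<le> card (edges X)"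
proof (cases "Q + 1 \<le> card (non_tree_edges (ball R))")
  case True
  then show ?thesis
    using small_dense_subset_if_many_non_tree_edges ball_subset by (meson order_trans)
next
  case False
  have "1 \<le> R"
    using assms(4) root_less by (cases R) auto
  moreover have "card (non_tree_edges (ball R)) \<le> Q"
    using False by simp
  ultimately have "2 ^ R \<le> card (ball R)"
    using two_power_le_card_ball[OF deg assms(2,3)] by blast
  also have "\<dots> \<le> n"
    using card_mono[OF _ ball_subset[of R]] by simp
  finally show ?thesis
    using assms(4) by simp
qed

end

section \<open>The subgraph of low colours\<close>

lemma deficit_ge_low_colour_edges:
  assumes of: "one_factorization n c" and S: "S \<subseteq> {0..<n}"
  shows "int (card {{x, y} | x y. x \<in> S \<and> y \<in> S \<and> x \<noteq> y \<and> c x y < t}) - int t \<le> deficit c S"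
proof -
  let ?A = "{{x, y} | x y. x \<in> S \<and> y \<in> S \<and> x \<noteq> y \<and> c x y < t}"
  let ?col = "\<lambda>e. c (Min e) (Max e)"
  have fin: "finite S"
    using S finite_subset by blast
  have sym: "c x y = c y x" if "x \<in> S" "y \<in> S" "x \<noteq> y" for x y
    using that S by (intro one_factorization_sym[OF of]) auto
  have A: "?A \<subseteq> [S]\<^bsup>2\<^esup>"
    by auto
  have "colours_in c S \<subseteq> {..<t} \<union> ?col ` ([S]\<^bsup>2\<^esup> - ?A)"
  proof
    fix col assume "col \<in> colours_in c S"
    then obtain x y where xy: "x \<in> S" "y \<in> S" "x \<noteq> y" "col = c x y"
      unfolding colours_in_def by blast
    show "col \<in> {..<t} \<union> ?col ` ([S]\<^bsup>2\<^esup> - ?A)"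
    proof (cases "col < t")
      case False
      have "{x, y} \<notin> ?A"
        using False xy sym by (auto simp: doubleton_eq_iff)
      moreover have "?col {x, y} = col"
        using xy sym by (cases "x < y") (auto simp: min_def max_def)
      ultimately show ?thesis
        using xy by (intro UnI2 rev_image_eqI[of "{x, y}"]) auto
    qed simp
  qed
  then have "gamma c S \<le> card ({..<t} \<union> ?col ` ([S]\<^bsup>2\<^esup> - ?A))"
    unfolding gamma_def using fin by (intro card_mono) (auto intro: finite_imp_finite_nsets)
  also have "\<dots> \<le> card {..<t} + card (?col ` ([S]\<^bsup>2\<^esup> - ?A))"
    by (rule card_Un_le)
  also have "\<dots> \<le> t + card ([S]\<^bsup>2\<^esup> - ?A)"
    using card_image_le[of "[S]\<^bsup>2\<^esup> - ?A" ?col] fin by (simp add: finite_imp_finite_nsets)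
  also have "\<dots> = t + (card S choose 2) - card ?A"
    using card_Diff_subset[OF finite_subset[OF A] A] card_mono[OF _ A] fin
    by (simp add: finite_imp_finite_nsets)
  finally show ?thesis
    unfolding deficit_def using card_mono[OF finite_imp_finite_nsets[OF fin] A] by simp
qed

lemma rooted_graph_low_colours:
  assumes of: "one_factorization n c" and "0 < n"
  shows "rooted_graph n (\<lambda>x y. x < n \<and> y < n \<and> x \<noteq> y \<and> c x y < t) 0"
  using assms one_factorization_sym[OF of] by unfold_locales auto

lemma card_low_colour_neighbours:
  assumes of: "one_factorization n c" and "t < n" "x < n"
  shows "t \<le> card {y. x < n \<and> y < n \<and> x \<noteq> y \<and> c x y < t}"
proof -
  let ?N = "{y. x < n \<and> y < n \<and> x \<noteq> y \<and> c x y < t}"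
  have "{..<t} \<subseteq> c x ` ?N"
  proof
    fix col assume "col \<in> {..<t}"
    then have "col < n - 1" "col < t"
      using assms(2) by auto
    then obtain z where "z < n" "z \<noteq> x" "c x z = col"
      using one_factorization_partner[OF of assms(3)] by blast
    with \<open>col < t\<close> assms(3) show "col \<in> c x ` ?N"
      by blast
  qed
  then have "t \<le> card (c x ` ?N)"
    using card_mono[of "c x ` ?N" "{..<t}"] by simp
  also have "\<dots> \<le> card ?N"
    by (rule card_image_le) simp
  finally show ?thesis .
qed

lemma floorlog_two_le_ln:
  assumes "3 \<le> n"
  shows "real (floorlog 2 n + 1) \<le> 4 * ln (real n)"
proof -
  let ?R = "floorlog 2 n"
  have ln_n: "1 \<le> ln (real n)"
    using assms exp_le by (subst ln_ge_iff) auto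
  have "real (?R - 1) * ln 2 = ln (2 ^ (?R - 1))"
    by (simp add: ln_realpow)
  also have "\<dots> \<le> ln (real n)"
    using floorlog_bounds[of n 2] assms by simp
  finally have "real (?R - 1) * (2 / 3) \<le> ln (real n)"
    using mult_left_mono[OF ln2_ge_two_thirds, of "real (?R - 1)"] by simp
  moreover have "1 \<le> ?R"
    using assms by (simp add: floorlog_def)
  ultimately show ?thesis
    using ln_n by (simp add: of_nat_diff)
qed

lemma exists_small_subset_deficit_ge:
  assumes of: "one_factorization n c" and "8 \<le> t" "t < n" "Q \<le> 2 * t" "n < 2 ^ R"
  shows "\<exists>S \<subseteq> {0..<n}. S \<noteq> {} \<and> card S \<le> 2 * (Q + 1) * (R + 1)
           \<and> int (card S + Q) - int t \<le> deficit c S"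
proof -
  let ?adj = "\<lambda>x y. x < n \<and> y < n \<and> x \<noteq> y \<and> c x y < t"
  interpret rooted_graph n ?adj 0
    using rooted_graph_low_colours[OF of] assms(3) by simp
  have deg: "\<forall>x<n. t \<le> card {y. ?adj x y}"
    using card_low_colour_neighbours[OF of assms(3)] by blast
  obtain X where X: "X \<subseteq> {0..<n}" "X \<noteq> {}" "card X \<le> 2 * (Q + 1) * (R + 1)"
    "card X + Q \<le> card (edges X)"
    using exists_small_dense_subset[OF deg assms(2,4,5)] by blast
  have "x < n" if "x \<in> X" for x
    using X(1) that by auto
  then have "edges X = {{x, y} | x y. x \<in> X \<and> y \<in> X \<and> x \<noteq> y \<and> c x y < t}"
    unfolding edges_def by blast
  then have "int (card X + Q) - int t \<le> deficit c X"
    using deficit_ge_low_colour_edges[OF of X(1), of t] X(4) by simp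
  with X show ?thesis
    by blast
qed

lemma exists_log_size_subset_deficit_ge:
  assumes of: "one_factorization n c" and d: "-2 \<le> d" and n: "nat d + 9 \<le> n"
  shows "\<exists>S \<subseteq> {0..<n}. 1 \<le> card S \<and> real (card S) \<le> real (8 * (2 * nat d + 9)) * ln (real n)
           \<and> int (card S) + d \<le> deficit c S"
proof -
  define t where "t = nat d + 8"
  define Q where "Q = nat (int t + d)"
  define R where "R = floorlog 2 n"
  have R: "n < 2 ^ R"
    using floorlog_bounds[of n 2] n unfolding R_def by simp
  have Q: "int Q = int t + d"
    using d unfolding Q_def t_def by simp
  have "d \<le> int (nat d)"
    by simp
  then have t: "8 \<le> t" "t < n" "Q \<le> 2 * t"
    using n Q t_def by linarith+
  obtain S where S: "S \<subseteq> {0..<n}" "S \<noteq> {}" "card S \<le> 2 * (Q + 1) * (R + 1)"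
    "int (card S + Q) - int t \<le> deficit c S"
    using exists_small_subset_deficit_ge[OF of t R] by blast
  have "1 \<le> card S"
    using S(1,2) finite_subset by (metis card_0_eq finite_atLeastLessThan less_one not_le)
  moreover have "int (card S) + d \<le> deficit c S"
    using S(4) Q by simp
  moreover have "real (card S) \<le> real (8 * (2 * nat d + 9)) * ln (real n)"
  proof -
    have "real (card S) \<le> real (2 * (Q + 1)) * real (R + 1)"
      using S(3) by (simp only: of_nat_mult[symmetric] of_nat_le_iff)
    also have "\<dots> \<le> real (2 * (2 * nat d + 9)) * (4 * ln (real n))"
      using floorlog_two_le_ln[of n] n d unfolding R_def Q_def t_def by (intro mult_mono) auto
    also have "\<dots> = real (8 * (2 * nat d + 9)) * ln (real n)"
      by (simp add: algebra_simps)
    finally show ?thesis .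
  qed
  ultimately show ?thesis
    using S(1) by blast
qed

theorem theorem4:
  shows "(\<forall>n k c. even n \<and> 4 \<le> k \<and> k \<le> n \<and> one_factorization n c \<longrightarrow>
            (\<exists>S. S \<subseteq> {0..<n} \<and> card S = k \<and> deficit c S \<ge> int k - 3))
       \<and> (\<forall>d::int. d \<ge> -2 \<longrightarrow>
            (\<exists>C::real. C > 0 \<and> (\<exists>n0::nat. \<forall>n c. even n \<and> n \<ge> n0 \<and> one_factorization n c \<longrightarrow>
               (\<exists>S k. S \<subseteq> {0..<n} \<and> card S = k \<and> 1 \<le> k \<and> real k \<le> C * ln (real n) \<and>
                      deficit c S \<ge> int k + d))))"
proof (intro conjI allI impI)
  fix n k c
  assume "even n \<and> 4 \<le> k \<and> k \<le> n \<and> one_factorization n c"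
  then show "\<exists>S. S \<subseteq> {0..<n} \<and> card S = k \<and> int k - 3 \<le> deficit c S"
    using exists_subset_deficit_ge[of n c k] by auto
next
  fix d :: int
  assume d: "-2 \<le> d"
  let ?C = "real (8 * (2 * nat d + 9))"
  have "\<forall>n c. even n \<and> nat d + 9 \<le> n \<and> one_factorization n c \<longrightarrow>
          (\<exists>S k. S \<subseteq> {0..<n} \<and> card S = k \<and> 1 \<le> k \<and> real k \<le> ?C * ln (real n) \<and> int k + d \<le> deficit c S)"
    using exists_log_size_subset_deficit_ge[OF _ d] by blast
  then show "\<exists>C>0. \<exists>n0. \<forall>n c. even n \<and> n0 \<le> n \<and> one_factorization n c \<longrightarrow>
          (\<exists>S k. S \<subseteq> {0..<n} \<and> card S = k \<and> 1 \<le> k \<and> real k \<le> C * ln (real n) \<and> int k + d \<le> deficit c S)"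
    by (intro exI[of _ ?C] conjI exI[of _ "nat d + 9"]) simp_all
qed

end
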